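(* Let $0\le q_0<q_1\le 1$, let $f_N^{(i)}$ and $F_N^{(i)}$ denote the probability mass function and cumulative distribution function of the binomial distribution $\mathrm{Bin}(N,q_i)$, $i\in\{0,1\}$, and let $N_R=N_R(N)$ be positive integers with $N_R\in\mathcal O(N)$. Define $$S_N=\sum_{k=1}^{N} f_N^{(1)}[k]\,\big(F_N^{(0)}[k-1]\big)^{N_R}.$$ Then $\lim_{N\to\infty}S_N=1$. *)

theory Defs
  imports "HOL-Probability.Probability" "HOL-Library.Landau_Symbols"
begin

definition binom_f :: "nat \<Rightarrow> real \<Rightarrow> nat \<Rightarrow> real" where
  "binom_f N q k = pmf (binomial_pmf N q) k"

definition binom_F :: "nat \<Rightarrow> real \<Rightarrow> nat \<Rightarrow> real" where
  "binom_F N q k = measure_pmf.prob (binomial_pmf N q) {..k}"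

end

theory Submission
  imports Defs "HOL-Real_Asymp.Real_Asymp"
begin

text \<open>
  Let \<open>c = (q0 + q1)/2\<close> and \<open>\<epsilon> = exp (-N (q1 - q0)\<^sup>2 / 2)\<close>. By Hoeffding's inequality a
  \<open>Bin(N, q1)\<close> sample \<open>k\<close> satisfies \<open>k \<ge> c N\<close> except with probability at most \<open>\<epsilon>\<close>, and for
  every such \<open>k\<close> the \<open>Bin(N, q0)\<close> tail from \<open>k\<close> on is at most \<open>\<epsilon>\<close> as well, i.e.
  \<open>F[k - 1] \<ge> 1 - \<epsilon>\<close>; Bernoulli's inequality then gives \<open>F[k - 1]^NR \<ge> 1 - NR \<epsilon>\<close>. Hence
  \<open>1 - (1 + NR) \<epsilon> \<le> S \<le> 1\<close>, and the lower bound tends to \<open>1\<close> because \<open>NR\<close> grows at most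
  linearly while \<open>\<epsilon>\<close> decays exponentially in \<open>N\<close>.
\<close>

lemma sum_pmf_mult_le_one:
  fixes p :: "'a pmf" and G :: "'a \<Rightarrow> real"
  assumes "finite A" and "\<And>k. k \<in> A \<Longrightarrow> 0 \<le> G k \<and> G k \<le> 1"
  shows "(\<Sum>k\<in>A. pmf p k * G k) \<le> 1"
proof -
  have "(\<Sum>k\<in>A. pmf p k * G k) \<le> (\<Sum>k\<in>A. pmf p k)"
    using assms(2) by (intro sum_mono mult_left_le) auto
  also have "\<dots> = measure_pmf.prob p A"
    using assms(1) by (simp add: measure_measure_pmf_finite)
  finally show ?thesis
    using measure_pmf.prob_le_1 order.trans by blast
qed

lemma sum_pmf_mult_power_ge:
  fixes p :: "'a pmf" and G :: "'a \<Rightarrow> real"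
  assumes "finite A" and "B \<subseteq> A" and "0 \<le> e"
    and nonneg: "\<And>k. k \<in> A \<Longrightarrow> 0 \<le> G k"
    and close: "\<And>k. k \<in> B \<Longrightarrow> 1 - e \<le> G k"
  shows "measure_pmf.prob p B - m * e \<le> (\<Sum>k\<in>A. pmf p k * G k ^ m)"
proof -
  have power_ge: "1 - m * e \<le> G k ^ m" if "k \<in> B" for k
  proof -
    have "1 + m * (G k - 1) \<le> (1 + (G k - 1)) ^ m"
      using nonneg \<open>B \<subseteq> A\<close> that by (intro Bernoulli_inequality) auto
    moreover have "m * (- e) \<le> m * (G k - 1)"
      using close[OF that] by (intro mult_left_mono) auto
    ultimately show ?thesis by simp
  qed
  have "measure_pmf.prob p B * (m * e) \<le> m * e"
    using \<open>0 \<le> e\<close> by (intro mult_left_le_one_le) auto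
  then have "measure_pmf.prob p B - m * e \<le> measure_pmf.prob p B * (1 - m * e)"
    by (simp add: algebra_simps)
  also have "\<dots> = (\<Sum>k\<in>B. pmf p k * (1 - m * e))"
    using assms(1,2) by (simp add: measure_measure_pmf_finite finite_subset sum_distrib_right)
  also have "\<dots> \<le> (\<Sum>k\<in>B. pmf p k * G k ^ m)"
    by (intro sum_mono mult_left_mono power_ge) auto
  also have "\<dots> \<le> (\<Sum>k\<in>A. pmf p k * G k ^ m)"
    using assms(1,2) nonneg by (intro sum_mono2) auto
  finally show ?thesis .
qed

lemma binomial_upper_tail_bound:
  assumes "0 \<le> q" and "q \<le> 1" and "N > 0" and "0 \<le> d"
  shows "measure_pmf.prob (binomial_pmf N q) {k. real N * (q + d) \<le> k} \<le> exp (-2 * real N * d\<^sup>2)"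
proof -
  interpret binomial_distribution N q
    using assms by unfold_locales auto
  have "{k. real N * (q + d) \<le> k} = {k. q + d \<le> real k / N}"
    using \<open>N > 0\<close> by (auto simp: field_simps)
  then show ?thesis
    using prob_ge'[OF \<open>N > 0\<close> \<open>0 \<le> d\<close>] by simp
qed

lemma binomial_lower_tail_bound:
  assumes "0 \<le> q" and "q \<le> 1" and "N > 0" and "0 \<le> d"
  shows "measure_pmf.prob (binomial_pmf N q) {k. real k \<le> N * (q - d)} \<le> exp (-2 * real N * d\<^sup>2)"
proof -
  interpret binomial_distribution N q
    using assms by unfold_locales auto
  have "{k. real k \<le> N * (q - d)} = {k. real k / N \<le> q - d}"
    using \<open>N > 0\<close> by (auto simp: field_simps)
  then show ?thesis
    using prob_le'[OF \<open>N > 0\<close> \<open>0 \<le> d\<close>] by simp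
qed

lemma binom_F_pred_ge:
  assumes "0 \<le> q" and "q \<le> 1" and "N > 0" and "0 \<le> d"
    and "k > 0" and "real N * (q + d) \<le> k"
  shows "1 - exp (-2 * real N * d\<^sup>2) \<le> binom_F N q (k - 1)"
proof -
  let ?p = "binomial_pmf N q"
  have "UNIV - {k..} = {..k - 1}"
    using \<open>k > 0\<close> by auto
  then have "binom_F N q (k - 1) = 1 - measure_pmf.prob ?p {k..}"
    unfolding binom_F_def using measure_pmf.prob_compl[of "{k..}" ?p] by simp
  moreover have "measure_pmf.prob ?p {k..} \<le> measure_pmf.prob ?p {x. real N * (q + d) \<le> x}"
    using \<open>real N * (q + d) \<le> k\<close> by (intro measure_pmf.finite_measure_mono) auto
  ultimately show ?thesis
    using binomial_upper_tail_bound[OF assms(1-4)] by linarith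
qed

lemma binomial_prob_ge_bound:
  assumes "0 \<le> q" and "q \<le> 1" and "N > 0" and "0 \<le> d"
  shows "1 - exp (-2 * real N * d\<^sup>2)
           \<le> measure_pmf.prob (binomial_pmf N q) {k. real N * (q - d) \<le> real k \<and> k \<le> N}"
proof -
  let ?p = "binomial_pmf N q"
  let ?L = "{k. real k < N * (q - d)}"
  have "set_pmf ?p \<subseteq> {..N}"
    using assms by (auto simp: set_pmf_binomial_eq)
  then have "{k. real N * (q - d) \<le> real k \<and> k \<le> N} \<inter> set_pmf ?p = (UNIV - ?L) \<inter> set_pmf ?p"
    by auto
  then have "measure_pmf.prob ?p {k. real N * (q - d) \<le> real k \<and> k \<le> N} = measure_pmf.prob ?p (UNIV - ?L)"
    by (metis measure_Int_set_pmf)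
  also have "\<dots> = 1 - measure_pmf.prob ?p ?L"
    using measure_pmf.prob_compl by simp
  moreover have "measure_pmf.prob ?p ?L \<le> measure_pmf.prob ?p {k. real k \<le> N * (q - d)}"
    by (intro measure_pmf.finite_measure_mono) auto
  ultimately show ?thesis
    using binomial_lower_tail_bound[OF assms] by linarith
qed

lemma binom_sum_power_ge:
  fixes q0 q1 :: real and N m :: nat
  assumes "0 \<le> q0" and "q0 < q1" and "q1 \<le> 1" and "N > 0"
  shows "1 - (1 + real m) * exp (- real N * (q1 - q0)\<^sup>2 / 2)
           \<le> (\<Sum>k=1..N. binom_f N q1 k * (binom_F N q0 (k - 1)) ^ m)"
proof -
  define d where "d = (q1 - q0) / 2"
  define c where "c = (q0 + q1) / 2"
  define e where "e = exp (-2 * real N * d\<^sup>2)"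
  have "0 \<le> d" and "q0 + d = c" and "q1 - d = c" and "0 < c"
    using assms by (auto simp: d_def c_def field_simps)
  have e_eq: "e = exp (- real N * (q1 - q0)\<^sup>2 / 2)"
    by (simp add: e_def d_def power_divide)
  let ?p1 = "binomial_pmf N q1"
  define B where "B = {k. real N * c \<le> real k \<and> k \<le> N}"
  have "B \<subseteq> {1..N}"
  proof
    fix k assume "k \<in> B"
    moreover have "0 < real N * c"
      using \<open>0 < c\<close> \<open>N > 0\<close> by simp
    ultimately have "0 < real k" and "k \<le> N"
      by (auto simp: B_def)
    then show "k \<in> {1..N}" by simp
  qed
  have F_ge: "1 - e \<le> binom_F N q0 (k - 1)" if "k \<in> B" for k
  proof -
    have "k > 0" and "real N * (q0 + d) \<le> k"
      using that \<open>B \<subseteq> {1..N}\<close> \<open>q0 + d = c\<close> by (auto simp: B_def)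
    then show ?thesis
      unfolding e_def using assms \<open>0 \<le> d\<close> by (intro binom_F_pred_ge) auto
  qed
  have "1 - e \<le> measure_pmf.prob ?p1 B"
    unfolding e_def B_def \<open>q1 - d = c\<close>[symmetric]
    using assms \<open>0 \<le> d\<close> by (intro binomial_prob_ge_bound) auto
  moreover have "measure_pmf.prob ?p1 B - m * e
      \<le> (\<Sum>k=1..N. binom_f N q1 k * (binom_F N q0 (k - 1)) ^ m)"
    unfolding binom_f_def
  proof (rule sum_pmf_mult_power_ge)
    show "B \<subseteq> {1..N}" by fact
    show "0 \<le> e"
      by (simp add: e_def)
    show "0 \<le> binom_F N q0 (k - 1)" for k
      by (simp add: binom_F_def)
    show "1 - e \<le> binom_F N q0 (k - 1)" if "k \<in> B" for k
      using that by (rule F_ge)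
  qed simp
  ultimately have "1 - (1 + real m) * e \<le> (\<Sum>k=1..N. binom_f N q1 k * (binom_F N q0 (k - 1)) ^ m)"
    unfolding distrib_right by linarith
  then show ?thesis
    by (simp only: e_eq)
qed

lemma binom_sum_power_le_one:
  "(\<Sum>k=1..N. binom_f N q1 k * (binom_F N q0 (k - 1)) ^ m) \<le> 1"
  unfolding binom_f_def
  by (intro sum_pmf_mult_le_one) (auto simp: binom_F_def power_le_one)

lemma bigo_linear_mult_exp_decay_tendsto_zero:
  fixes a :: real and g :: "nat \<Rightarrow> real"
  assumes "a > 0" and "g \<in> O(\<lambda>N. real N)" and "\<And>N. 0 \<le> g N"
  shows "(\<lambda>N. (1 + g N) * exp (- a * real N)) \<longlonglongrightarrow> 0"
proof -
  obtain C where C: "\<forall>\<^sub>F N in sequentially. norm (g N) \<le> C * norm (real N)"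
    using assms(2) by (auto elim!: landau_o.bigE)
  have nonneg: "\<forall>\<^sub>F N in sequentially. 0 \<le> (1 + g N) * exp (- a * real N)"
    using assms(3) by (simp add: add_nonneg_nonneg)
  have upper: "\<forall>\<^sub>F N in sequentially. (1 + g N) * exp (- a * real N) \<le> (1 + C * real N) * exp (- a * real N)"
    using C by eventually_elim (simp add: assms(3))
  have "(\<lambda>N. (1 + C * real N) * exp (- a * real N)) \<longlonglongrightarrow> 0"
    using \<open>a > 0\<close> by real_asymp
  then show ?thesis
    by (rule tendsto_sandwich[OF nonneg upper tendsto_const])
qed

theorem mainTheorem3:
  fixes q0 q1 :: real and NR :: "nat \<Rightarrow> nat"
  assumes "0 \<le> q0" and "q0 < q1" and "q1 \<le> 1"
    and "\<And>N. NR N > 0"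
    and "(\<lambda>N. real (NR N)) \<in> O(\<lambda>N. real N)"
  shows "(\<lambda>N. \<Sum>k=1..N. binom_f N q1 k * (binom_F N q0 (k - 1)) ^ (NR N)) \<longlonglongrightarrow> 1"
proof -
  define a where "a = (q1 - q0)\<^sup>2 / 2"
  have "a > 0"
    using assms(2) by (simp add: a_def)
  then have decay: "(\<lambda>N. (1 + real (NR N)) * exp (- a * real N)) \<longlonglongrightarrow> 0"
    using assms(5) by (intro bigo_linear_mult_exp_decay_tendsto_zero) auto
  have lower_limit: "(\<lambda>N. 1 - (1 + real (NR N)) * exp (- a * real N)) \<longlonglongrightarrow> 1"
    using tendsto_diff[OF tendsto_const[of 1] decay] by simp
  have lower: "\<forall>\<^sub>F N in sequentially. 1 - (1 + real (NR N)) * exp (- a * real N)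
      \<le> (\<Sum>k=1..N. binom_f N q1 k * (binom_F N q0 (k - 1)) ^ (NR N))"
    using eventually_gt_at_top[of 0]
  proof eventually_elim
    case (elim N)
    show ?case
      using binom_sum_power_ge[OF assms(1-3) elim, of "NR N"] by (simp add: a_def mult_ac)
  qed
  have upper: "\<forall>\<^sub>F N in sequentially.
      (\<Sum>k=1..N. binom_f N q1 k * (binom_F N q0 (k - 1)) ^ (NR N)) \<le> 1"
    by (intro always_eventually allI binom_sum_power_le_one)
  show ?thesis
    by (rule tendsto_sandwich[OF lower upper lower_limit tendsto_const])
qed

end
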